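(* Let $K\subset\mathbb{R}^d$ be nonempty, closed, convex with $\mathrm{B}_d(0)\subseteq K\subseteq R\,\mathrm{B}_d(0)$, let $f$ be convex and $L$-Lipschitz on $K$, let $a,\eta>0$, $(y,s)\in\mathbb{R}^d\times\mathbb{R}$, $Q=\{(x,t):x\in K,f(x)\le at\}$, $z=(y,s-a\eta)$, $\Theta(x,t)=I_Q(x,t)+\frac1{2\eta}\|(x,t)-z\|^2-\frac{a^2\eta}2+as$, and $\zeta(x)=\frac1{2\eta}\|x-y\|^2+\frac1{2\eta}\big[\frac{f(x)}a-(s-a\eta)\big]_+^2$ for $x\in K$. Then: (a) the minimizer of $\Theta$ over $\mathbb{R}^{d+1}$ is $(x_*,t_* )$ with $x_*=\arg\min_{x\in K}\zeta(x)$ and $t_*=\max\{f(x_* )/a,\ s-a\eta\}$; (b) $\zeta$ is $\eta^{-1}$-strongly convex; (c) if $\tilde x\in K$ satisfies $\zeta(\tilde x)-\min_K\zeta\le\frac1{d+1}$ and $\tilde t=\max\{f(\tilde x)/a,s-a\eta\}$, then $\tilde w=(\tilde x,\tilde t)$ satisfies $\|\tilde w-\mathrm{proj}_Q(z)\|\le(1+\frac La)\sqrt{\frac{2\eta}{d+1}}$.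
   Context: $[u]_+=\max\{u,0\}$; $I_Q$ is $0$ on $Q$ and $+\infty$ off $Q$; $\mathrm{proj}_Q(z)=\arg\min_{w\in Q}\|w-z\|$ (which is the minimizer of $\Theta$). *)

theory Defs
  imports "HOL-Analysis.Analysis"
begin

definition conv_indicator :: "'a set \<Rightarrow> 'a \<Rightarrow> ereal" where
  "conv_indicator Q w = (if w \<in> Q then 0 else \<infinity>)"

definition pos_part :: "real \<Rightarrow> real" where
  "pos_part u = max u 0"

definition strongly_convex_on :: "'a::real_normed_vector set \<Rightarrow> real \<Rightarrow> ('a \<Rightarrow> real) \<Rightarrow> bool" where
  "strongly_convex_on S \<mu> g \<longleftrightarrow> convex S \<and>
     (\<forall>x\<in>S. \<forall>y\<in>S. \<forall>u::real. 0 \<le> u \<and> u \<le> 1 \<longrightarrow>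
        g ((1 - u) *\<^sub>R x + u *\<^sub>R y) \<le> (1 - u) * g x + u * g y - \<mu> / 2 * u * (1 - u) * (norm (x - y))\<^sup>2)"

end

theory Submission
  imports Defs
begin

text \<open>
  Q is the epigraph of f/a over K. For fixed x the point of the fibre above x closest to
  z = (y, s - a\<eta>) is (x, max (f x / a) (s - a\<eta>)), at squared distance 2\<eta> \<zeta>(x); so projecting z
  onto Q amounts to minimising \<zeta> over K and lifting the minimiser, and this projection is
  the minimiser of \<Theta>. \<zeta> is a multiple of a squared norm plus the square of a nonnegative
  convex function, hence strongly convex. Finally, the obtuse-angle property of the projection
  P gives |w - P|^2 \<le> |w - z|^2 - |P - z|^2 = 2\<eta> (\<zeta>(x) - min \<zeta>) for the lift w of any x \<in> K,
  which yields (c) even without the factor 1 + L/a.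
\<close>

lemma convex_on_max:
  assumes f: "convex_on S f" and g: "convex_on S g"
  shows "convex_on S (\<lambda>x. max (f x) (g x))"
proof (rule convex_onI)
  fix t :: real and x y assume t: "0 < t" "t < 1" and xy: "x \<in> S" "y \<in> S"
  have "h ((1 - t) *\<^sub>R x + t *\<^sub>R y) \<le> (1 - t) * max (f x) (g x) + t * max (f y) (g y)"
    if h: "convex_on S h" "\<forall>x. h x \<le> max (f x) (g x)" for h
  proof -
    have "h ((1 - t) *\<^sub>R x + t *\<^sub>R y) \<le> (1 - t) * h x + t * h y"
      using convex_onD[OF h(1)] t xy by simp
    also have "\<dots> \<le> (1 - t) * max (f x) (g x) + t * max (f y) (g y)"
      using h(2) t by (intro add_mono mult_left_mono) auto
    finally show ?thesis .
  qed
  from this[OF f] this[OF g]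
  show "max (f ((1 - t) *\<^sub>R x + t *\<^sub>R y)) (g ((1 - t) *\<^sub>R x + t *\<^sub>R y))
      \<le> (1 - t) * max (f x) (g x) + t * max (f y) (g y)"
    by simp
qed (use convex_on_imp_convex[OF f] in simp)

lemma convex_on_compose_mono:
  fixes h :: "real \<Rightarrow> real"
  assumes g: "convex_on S g" and h: "convex_on T h" "mono_on T h" and gS: "g ` S \<subseteq> T"
  shows "convex_on S (\<lambda>x. h (g x))"
proof (rule convex_onI)
  fix t :: real and x y assume t: "0 < t" "t < 1" and xy: "x \<in> S" "y \<in> S"
  have "(1 - t) *\<^sub>R x + t *\<^sub>R y \<in> S"
    using convexD_alt[OF convex_on_imp_convex[OF g] xy] t by simp
  moreover have "(1 - t) * g x + t * g y \<in> T"
    using convexD_alt[OF convex_on_imp_convex[OF h(1)], of "g x" "g y" t] gS xy t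
    by (auto simp: algebra_simps)
  ultimately have "h (g ((1 - t) *\<^sub>R x + t *\<^sub>R y)) \<le> h ((1 - t) * g x + t * g y)"
    using convex_onD[OF g, of t x y] t xy gS by (intro mono_onD[OF h(2)]) auto
  also have "\<dots> \<le> (1 - t) * h (g x) + t * h (g y)"
    using convex_onD[OF h(1), of t "g x" "g y"] t xy gS by (simp add: image_subset_iff)
  finally show "h (g ((1 - t) *\<^sub>R x + t *\<^sub>R y)) \<le> (1 - t) * h (g x) + t * h (g y)" .
qed (use convex_on_imp_convex[OF g] in simp)

lemma convex_on_power2_nonneg:
  assumes "convex_on S g" "\<And>x. x \<in> S \<Longrightarrow> 0 \<le> g x"
  shows "convex_on S (\<lambda>x. (g x)\<^sup>2)"
proof (rule convex_on_compose_mono[OF assms(1)])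
  show "convex_on {0..} (\<lambda>u::real. u\<^sup>2)"
    by (rule convex_on_subset[OF convex_power2]) auto
  show "mono_on {0..} (\<lambda>u::real. u\<^sup>2)"
    by (auto intro: mono_onI power_mono)
qed (use assms(2) in auto)

lemma power2_norm_convex_combination_minus:
  fixes x w y :: "'a::real_inner"
  shows "(norm ((1 - u) *\<^sub>R x + u *\<^sub>R w - y))\<^sup>2
       = (1 - u) * (norm (x - y))\<^sup>2 + u * (norm (w - y))\<^sup>2 - u * (1 - u) * (norm (x - w))\<^sup>2"
proof -
  have "(1 - u) *\<^sub>R x + u *\<^sub>R w - y = (1 - u) *\<^sub>R (x - y) + u *\<^sub>R (w - y)"
    and "x - w = (x - y) - (w - y)"
    by (simp_all add: algebra_simps)
  then show ?thesis
    unfolding power2_norm_eq_inner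
    by (simp add: inner_add_left inner_add_right inner_diff_left inner_diff_right inner_commute
        algebra_simps power2_eq_square)
qed

lemma strongly_convex_on_norm_sq:
  fixes y :: "'a::real_inner"
  assumes "convex S"
  shows "strongly_convex_on S \<mu> (\<lambda>x. \<mu> / 2 * (norm (x - y))\<^sup>2)"
  unfolding strongly_convex_on_def
proof (intro conjI assms ballI allI impI)
  fix x w u
  show "\<mu> / 2 * (norm ((1 - u) *\<^sub>R x + u *\<^sub>R w - y))\<^sup>2
      \<le> (1 - u) * (\<mu> / 2 * (norm (x - y))\<^sup>2) + u * (\<mu> / 2 * (norm (w - y))\<^sup>2)
         - \<mu> / 2 * u * (1 - u) * (norm (x - w))\<^sup>2"
    unfolding power2_norm_convex_combination_minus by (simp add: field_simps)
qed

lemma strongly_convex_on_add_convex_on: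
  assumes "strongly_convex_on S \<mu> f" "convex_on S g"
  shows "strongly_convex_on S \<mu> (\<lambda>x. f x + g x)"
  unfolding strongly_convex_on_def
proof (intro conjI ballI allI impI)
  show "convex S" using assms(1) by (simp add: strongly_convex_on_def)
next
  fix x w and u :: real
  assume xw: "x \<in> S" "w \<in> S" and u: "0 \<le> u \<and> u \<le> 1"
  have "f ((1 - u) *\<^sub>R x + u *\<^sub>R w)
      \<le> (1 - u) * f x + u * f w - \<mu> / 2 * u * (1 - u) * (norm (x - w))\<^sup>2"
    using assms(1) xw u unfolding strongly_convex_on_def by blast
  moreover have "g ((1 - u) *\<^sub>R x + u *\<^sub>R w) \<le> (1 - u) * g x + u * g w"
    using convex_onD[OF assms(2)] xw u by blast
  ultimately show "f ((1 - u) *\<^sub>R x + u *\<^sub>R w) + g ((1 - u) *\<^sub>R x + u *\<^sub>R w)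
      \<le> (1 - u) * (f x + g x) + u * (f w + g w) - \<mu> / 2 * u * (1 - u) * (norm (x - w))\<^sup>2"
    by (simp add: algebra_simps)
qed

lemma closed_epigraph:
  assumes "closed S" "continuous_on S f"
  shows "closed (epigraph S f)"
proof -
  have "continuous_on (S \<times> UNIV) (\<lambda>w. f (fst w) - snd w)"
    by (intro continuous_intros continuous_on_compose2[OF assms(2)]) auto
  then have "closed ((S \<times> UNIV) \<inter> (\<lambda>w. f (fst w) - snd w) -` {..0})"
    by (rule continuous_closed_preimage) (auto intro: closed_Times assms(1))
  moreover have "(S \<times> UNIV) \<inter> (\<lambda>w. f (fst w) - snd w) -` {..0} = epigraph S f"
    by (auto simp: epigraph_def)
  ultimately show ?thesis by simp
qed

lemma closest_point_eq_iff_norm_sq_le: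
  fixes S :: "'a::euclidean_space set"
  assumes "convex S" "closed S" "w \<in> S"
  shows "w = closest_point S z \<longleftrightarrow> (\<forall>v\<in>S. (norm (w - z))\<^sup>2 \<le> (norm (v - z))\<^sup>2)"
  using closest_point_unique[OF assms, of z] closest_point_le[OF assms(2), of _ z]
  by (auto simp: dist_norm norm_minus_commute power_mono_iff)

lemma power2_norm_closest_point_le:
  fixes S :: "'a::euclidean_space set"
  assumes "convex S" "closed S" "w \<in> S"
  shows "(norm (w - closest_point S z))\<^sup>2 + (norm (closest_point S z - z))\<^sup>2 \<le> (norm (w - z))\<^sup>2"
proof -
  let ?p = "closest_point S z"
  have "w - z = (w - ?p) - (z - ?p)" by simp
  then have "(norm (w - z))\<^sup>2 = (norm (w - ?p))\<^sup>2 + (norm (?p - z))\<^sup>2 - 2 * inner (z - ?p) (w - ?p)"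
    unfolding power2_norm_eq_inner
    by (simp add: inner_diff_left inner_diff_right inner_commute algebra_simps)
  with closest_point_dot[OF assms, of z] show ?thesis by linarith
qed

lemma conv_indicator_add_norm_sq_minimal_iff:
  fixes S :: "'a::euclidean_space set"
  assumes "convex S" "closed S" "S \<noteq> {}" "k > 0"
  shows "(\<forall>v. conv_indicator S w + ereal (k * (norm (w - z))\<^sup>2 + b)
              \<le> conv_indicator S v + ereal (k * (norm (v - z))\<^sup>2 + b))
         \<longleftrightarrow> w = closest_point S z"
proof (cases "w \<in> S")
  case True
  then show ?thesis
    using closest_point_eq_iff_norm_sq_le[OF assms(1,2) True, of z] assms(4)
    by (auto simp: conv_indicator_def)
next
  case False
  have "closest_point S z \<in> S" using closest_point_in_set[OF assms(2,3)] .
  with False show ?thesis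
    by (auto simp: conv_indicator_def dest: spec[of _ "closest_point S z"])
qed

locale epigraph_projection =
  fixes K :: "'a::euclidean_space set" and g :: "'a \<Rightarrow> real" and y :: 'a and c :: real
  assumes K_closed: "closed K" and K_nonempty: "K \<noteq> {}"
    and g_convex: "convex_on K g" and g_continuous: "continuous_on K g"
begin

definition lift :: "'a \<Rightarrow> 'a \<times> real" where
  "lift x = (x, max (g x) c)"

definition fibre_dist_sq :: "'a \<Rightarrow> real" where
  "fibre_dist_sq x = (norm (x - y))\<^sup>2 + (pos_part (g x - c))\<^sup>2"

lemma closed_epigraph_g: "closed (epigraph K g)"
  using closed_epigraph[OF K_closed g_continuous] .

lemma convex_epigraph_g: "convex (epigraph K g)"
  using convex_epigraphI[OF g_convex] .

lemma lift_in_epigraph: "x \<in> K \<Longrightarrow> lift x \<in> epigraph K g"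
  by (simp add: lift_def mem_epigraph)

lemma power2_norm_lift_minus: "(norm (lift x - (y, c)))\<^sup>2 = fibre_dist_sq x"
  by (simp add: lift_def fibre_dist_sq_def norm_Pair pos_part_def max_diff_distrib_left)

lemma fibre_dist_sq_le:
  assumes "(x, t) \<in> epigraph K g"
  shows "fibre_dist_sq x \<le> (norm ((x, t) - (y, c)))\<^sup>2"
proof -
  have "g x \<le> t" using assms by (simp add: mem_epigraph)
  then have "(pos_part (g x - c))\<^sup>2 \<le> (t - c)\<^sup>2"
    unfolding pos_part_def by (cases "g x \<le> c") (auto intro: power_mono)
  then show ?thesis by (simp add: fibre_dist_sq_def norm_Pair)
qed

lemma closest_point_minimizes_fibre_dist_sq:
  defines "p \<equiv> fst (closest_point (epigraph K g) (y, c))"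
  shows "p \<in> K" and "x \<in> K \<Longrightarrow> fibre_dist_sq p \<le> fibre_dist_sq x"
proof -
  let ?P = "closest_point (epigraph K g) (y, c)"
  have P_in: "?P \<in> epigraph K g"
    using closest_point_in_set[OF closed_epigraph_g] K_nonempty lift_in_epigraph by blast
  then show "p \<in> K" by (cases ?P) (simp add: p_def mem_epigraph)
  assume "x \<in> K"
  have "fibre_dist_sq p \<le> (norm (?P - (y, c)))\<^sup>2"
    using fibre_dist_sq_le[of p "snd ?P"] P_in by (simp add: p_def)
  also have "\<dots> \<le> (norm (lift x - (y, c)))\<^sup>2"
    using closest_point_eq_iff_norm_sq_le[OF convex_epigraph_g closed_epigraph_g P_in]
      lift_in_epigraph[OF \<open>x \<in> K\<close>] by blast
  finally show "fibre_dist_sq p \<le> fibre_dist_sq x" by (simp add: power2_norm_lift_minus)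
qed

lemma minimizer_iff_lift_eq_closest_point:
  assumes "x \<in> K"
  shows "(\<forall>x'\<in>K. fibre_dist_sq x \<le> fibre_dist_sq x')
    \<longleftrightarrow> lift x = closest_point (epigraph K g) (y, c)"
proof -
  have "(\<forall>x'\<in>K. fibre_dist_sq x \<le> fibre_dist_sq x')
      \<longleftrightarrow> (\<forall>w\<in>epigraph K g. fibre_dist_sq x \<le> (norm (w - (y, c)))\<^sup>2)"
  proof
    assume min: "\<forall>x'\<in>K. fibre_dist_sq x \<le> fibre_dist_sq x'"
    show "\<forall>w\<in>epigraph K g. fibre_dist_sq x \<le> (norm (w - (y, c)))\<^sup>2"
    proof
      fix w assume w: "w \<in> epigraph K g"
      then obtain x' t where w_eq: "w = (x', t)" and "x' \<in> K"
        by (cases w) (simp add: mem_epigraph)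
      then have "fibre_dist_sq x \<le> fibre_dist_sq x'" using min by blast
      also have "\<dots> \<le> (norm (w - (y, c)))\<^sup>2" using fibre_dist_sq_le w unfolding w_eq .
      finally show "fibre_dist_sq x \<le> (norm (w - (y, c)))\<^sup>2" .
    qed
  next
    assume "\<forall>w\<in>epigraph K g. fibre_dist_sq x \<le> (norm (w - (y, c)))\<^sup>2"
    then have "\<forall>x'\<in>K. fibre_dist_sq x \<le> (norm (lift x' - (y, c)))\<^sup>2"
      using lift_in_epigraph by blast
    then show "\<forall>x'\<in>K. fibre_dist_sq x \<le> fibre_dist_sq x'"
      unfolding power2_norm_lift_minus .
  qed
  also have "\<dots> \<longleftrightarrow> lift x = closest_point (epigraph K g) (y, c)"
    using closest_point_eq_iff_norm_sq_le[OF convex_epigraph_g closed_epigraph_g lift_in_epigraph[OF assms],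
        of "(y, c)"]
    unfolding power2_norm_lift_minus by blast
  finally show ?thesis .
qed

lemma ex1_minimizer_fibre_dist_sq: "\<exists>!x. x \<in> K \<and> (\<forall>x'\<in>K. fibre_dist_sq x \<le> fibre_dist_sq x')"
proof (rule ex1I)
  show "fst (closest_point (epigraph K g) (y, c)) \<in> K \<and>
      (\<forall>x'\<in>K. fibre_dist_sq (fst (closest_point (epigraph K g) (y, c))) \<le> fibre_dist_sq x')"
    using closest_point_minimizes_fibre_dist_sq by blast
next
  fix x assume "x \<in> K \<and> (\<forall>x'\<in>K. fibre_dist_sq x \<le> fibre_dist_sq x')"
  then have "lift x = closest_point (epigraph K g) (y, c)"
    using minimizer_iff_lift_eq_closest_point by blast
  from this[symmetric] show "x = fst (closest_point (epigraph K g) (y, c))"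
    by (simp add: lift_def)
qed

lemma closest_point_epigraph_eq_lift:
  "closest_point (epigraph K g) (y, c)
    = lift (THE x. x \<in> K \<and> (\<forall>x'\<in>K. fibre_dist_sq x \<le> fibre_dist_sq x'))"
proof -
  let ?p = "THE x. x \<in> K \<and> (\<forall>x'\<in>K. fibre_dist_sq x \<le> fibre_dist_sq x')"
  have "?p \<in> K \<and> (\<forall>x'\<in>K. fibre_dist_sq ?p \<le> fibre_dist_sq x')"
    by (rule theI'[OF ex1_minimizer_fibre_dist_sq])
  then have "lift ?p = closest_point (epigraph K g) (y, c)"
    using minimizer_iff_lift_eq_closest_point by blast
  then show ?thesis by simp
qed

lemma strongly_convex_on_fibre_dist_sq:
  assumes "\<mu> \<ge> 0"
  shows "strongly_convex_on K \<mu> (\<lambda>x. \<mu> / 2 * fibre_dist_sq x)"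
proof -
  have K_convex: "convex K" using convex_on_imp_convex[OF g_convex] .
  have "convex_on K (\<lambda>x. g x - c)"
    using convex_on_diff[OF g_convex] K_convex by (simp add: concave_on_const)
  then have "convex_on K (\<lambda>x. pos_part (g x - c))"
    unfolding pos_part_def using K_convex by (intro convex_on_max) (simp_all add: convex_on_const)
  then have "convex_on K (\<lambda>x. \<mu> / 2 * (pos_part (g x - c))\<^sup>2)"
    using assms by (intro convex_on_cmul convex_on_power2_nonneg) (auto simp: pos_part_def)
  then have "strongly_convex_on K \<mu>
      (\<lambda>x. \<mu> / 2 * (norm (x - y))\<^sup>2 + \<mu> / 2 * (pos_part (g x - c))\<^sup>2)"
    by (rule strongly_convex_on_add_convex_on[OF strongly_convex_on_norm_sq[OF K_convex]])
  then show ?thesis unfolding fibre_dist_sq_def distrib_left .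
qed

lemma norm_lift_minus_closest_point_le:
  assumes "x \<in> K" "\<mu> > 0"
    and suboptimal: "\<mu> / 2 * fibre_dist_sq x - Inf ((\<lambda>x. \<mu> / 2 * fibre_dist_sq x) ` K) \<le> \<epsilon>"
  shows "norm (lift x - closest_point (epigraph K g) (y, c)) \<le> sqrt (2 * \<epsilon> / \<mu>)"
proof -
  let ?P = "closest_point (epigraph K g) (y, c)"
  obtain p where p: "p \<in> K" "\<forall>x'\<in>K. fibre_dist_sq p \<le> fibre_dist_sq x'"
    using ex1_minimizer_fibre_dist_sq by blast
  then have P_eq: "?P = lift p" using minimizer_iff_lift_eq_closest_point by simp
  have "Inf ((\<lambda>x. \<mu> / 2 * fibre_dist_sq x) ` K) = \<mu> / 2 * fibre_dist_sq p"
    using p assms(2) by (intro cInf_eq_minimum) (auto intro: mult_left_mono)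
  with suboptimal assms(2) have gap: "fibre_dist_sq x - fibre_dist_sq p \<le> 2 * \<epsilon> / \<mu>"
    by (simp add: field_simps)
  have "(norm (lift x - ?P))\<^sup>2 + (norm (?P - (y, c)))\<^sup>2 \<le> (norm (lift x - (y, c)))\<^sup>2"
    by (rule power2_norm_closest_point_le[OF convex_epigraph_g closed_epigraph_g
          lift_in_epigraph[OF assms(1)]])
  then have "(norm (lift x - ?P))\<^sup>2 \<le> 2 * \<epsilon> / \<mu>"
    using gap unfolding P_eq power2_norm_lift_minus by linarith
  then show ?thesis by (rule real_le_rsqrt)
qed

end

theorem lemma18:
  fixes K :: "'a::euclidean_space set" and f :: "'a \<Rightarrow> real"
    and R L a \<eta> s :: real and y :: 'a
    and Q :: "('a \<times> real) set" and z :: "'a \<times> real"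
    and \<Theta> :: "'a \<times> real \<Rightarrow> ereal" and \<zeta> :: "'a \<Rightarrow> real"
  assumes K_ne: "K \<noteq> {}" and K_closed: "closed K" and K_convex: "convex K"
    and K_in: "ball 0 1 \<subseteq> K" and K_out: "K \<subseteq> cball 0 R"
    and f_convex: "convex_on K f" and f_lip: "L-lipschitz_on K f"
    and a_pos: "a > 0" and eta_pos: "\<eta> > 0"
    and Q_def: "Q \<equiv> {(x, t). x \<in> K \<and> f x \<le> a * t}"
    and z_def: "z \<equiv> (y, s - a * \<eta>)"
    and Theta_def: "\<Theta> \<equiv> (\<lambda>w. conv_indicator Q w
                    + ereal (1 / (2 * \<eta>) * (norm (w - z))\<^sup>2 - a\<^sup>2 * \<eta> / 2 + a * s))"
    and zeta_def: "\<zeta> \<equiv> (\<lambda>x. 1 / (2 * \<eta>) * (norm (x - y))\<^sup>2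
                    + 1 / (2 * \<eta>) * (pos_part (f x / a - (s - a * \<eta>)))\<^sup>2)"
  shows
    "(\<exists>!x. x \<in> K \<and> (\<forall>x'\<in>K. \<zeta> x \<le> \<zeta> x')) \<and>
     (let xs = (THE x. x \<in> K \<and> (\<forall>x'\<in>K. \<zeta> x \<le> \<zeta> x'));
          ts = max (f xs / a) (s - a * \<eta>)
      in (\<forall>v. \<Theta> (xs, ts) \<le> \<Theta> v) \<and> (\<forall>w. (\<forall>v. \<Theta> w \<le> \<Theta> v) \<longrightarrow> w = (xs, ts)))
     \<and> strongly_convex_on K (1 / \<eta>) \<zeta>
     \<and> (\<forall>xt\<in>K. \<zeta> xt - Inf (\<zeta> ` K) \<le> 1 / (real DIM('a) + 1) \<longrightarrow>
          norm ((xt, max (f xt / a) (s - a * \<eta>)) - closest_point Q z)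
            \<le> (1 + L / a) * sqrt (2 * \<eta> / (real DIM('a) + 1)))"
proof -
  let ?g = "\<lambda>x. f x / a" and ?c = "s - a * \<eta>"
    and ?xs = "THE x. x \<in> K \<and> (\<forall>x'\<in>K. \<zeta> x \<le> \<zeta> x')"
  interpret epigraph_projection K ?g y ?c
    using K_closed K_ne f_convex a_pos lipschitz_on_continuous_on[OF f_lip]
    by unfold_locales (auto intro: continuous_intros)
  have Q_eq: "Q = epigraph K ?g"
    using a_pos by (auto simp: Q_def epigraph_def pos_divide_le_eq mult.commute)
  have z_eq: "z = (y, ?c)" by (simp add: z_def)
  have zeta_eq: "\<zeta> = (\<lambda>x. (1 / \<eta>) / 2 * fibre_dist_sq x)"
    unfolding zeta_def fibre_dist_sq_def by (simp add: fun_eq_iff distrib_left mult.commute)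
  have argmin_eq: "(\<lambda>x. x \<in> K \<and> (\<forall>x'\<in>K. \<zeta> x \<le> \<zeta> x'))
      = (\<lambda>x. x \<in> K \<and> (\<forall>x'\<in>K. fibre_dist_sq x \<le> fibre_dist_sq x'))"
    using eta_pos by (simp add: zeta_eq fun_eq_iff divide_le_cancel)
  have closest_eq: "closest_point Q z = (?xs, max (f ?xs / a) ?c)"
    unfolding Q_eq z_eq argmin_eq closest_point_epigraph_eq_lift by (simp add: lift_def)
  have ex1: "\<exists>!x. x \<in> K \<and> (\<forall>x'\<in>K. \<zeta> x \<le> \<zeta> x')"
    unfolding argmin_eq by (rule ex1_minimizer_fibre_dist_sq)
  have strongly_convex: "strongly_convex_on K (1 / \<eta>) \<zeta>"
    unfolding zeta_eq by (rule strongly_convex_on_fibre_dist_sq) (use eta_pos in simp)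
  have Theta_minimal_iff: "(\<forall>v. \<Theta> w \<le> \<Theta> v) \<longleftrightarrow> w = closest_point Q z" for w
  proof -
    have "\<Theta> = (\<lambda>w. conv_indicator Q w
        + ereal (1 / (2 * \<eta>) * (norm (w - z))\<^sup>2 + (a * s - a\<^sup>2 * \<eta> / 2)))"
      by (simp add: Theta_def algebra_simps)
    moreover have "epigraph K ?g \<noteq> {}" using lift_in_epigraph K_ne by blast
    ultimately show ?thesis
      using conv_indicator_add_norm_sq_minimal_iff[OF convex_epigraph_g closed_epigraph_g,
          of "1 / (2 * \<eta>)" w z "a * s - a\<^sup>2 * \<eta> / 2"] eta_pos
      by (simp add: Q_eq)
  qed
  have near: "norm ((x, max (f x / a) ?c) - closest_point Q z)
      \<le> (1 + L / a) * sqrt (2 * \<eta> / (real DIM('a) + 1))"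
    if "x \<in> K" "\<zeta> x - Inf (\<zeta> ` K) \<le> 1 / (real DIM('a) + 1)" for x
  proof -
    have "norm ((x, max (f x / a) ?c) - closest_point Q z) \<le> sqrt (2 * \<eta> / (real DIM('a) + 1))"
      using norm_lift_minus_closest_point_le[of x "1 / \<eta>" "1 / (real DIM('a) + 1)"] that eta_pos
      by (simp add: lift_def Q_eq z_eq zeta_eq)
    also have "\<dots> \<le> (1 + L / a) * sqrt (2 * \<eta> / (real DIM('a) + 1))"
      using lipschitz_on_nonneg[OF f_lip] a_pos eta_pos
        mult_right_mono[of 1 "1 + L / a" "sqrt (2 * \<eta> / (real DIM('a) + 1))"]
      by simp
    finally show ?thesis .
  qed
  show ?thesis
    unfolding Let_def Theta_minimal_iff closest_eq[symmetric] using ex1 strongly_convex near by blast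
qed

end
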